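(* In the stochastic epidemic model described in the context, for every $k\ge1$, $$I(k)=\Phi_I(k,0)I_0-\sum_{i=0}^{k-1}\Phi_I(k,i+1)\,v(i)\,u(i),$$ and the expected infected cases satisfy $$\mathbb{E}[I(k)]\le (1+\overline{\delta}-\overline{d_I})^{k}I_0-v_{\min}\sum_{i=0}^{k-1}(1+\overline{\delta}-\overline{d_I})^{k-i-1}\,\mathbb{E}[u(i)].$$
   Context: Time is indexed by days $k=0,1,2,\dots$. Let $(\delta(k))_{k\ge0}$, $(d_I(k))_{k\ge0}$, $(v(k))_{k\ge0}$ be three mutually independent sequences of random variables, each sequence i.i.d. in $k$, with $0\le \delta(k)\le \delta_{\max}$, $0\le d_I(k)\le d_{\max}$ where $d_{\max}<1$, and $0<v_{\min}\le v(k)\le v_{\max}\le 1$. Write $\overline{\delta}=\mathbb{E}[\delta(k)]$, $\overline{d_I}=\mathbb{E}[d_I(k)]$. The control $u(k)\ge0$ is causal: $u(k)$ is a function only of the information (states) available up to day $k$. The cases evolve by $S(k+1)=S(k)-\delta(k)I(k)$, $I(k+1)=(1+\delta(k))I(k)-v(k)u(k)-d_I(k)I(k)$, $R(k+1)=R(k)+v(k)u(k)$, $D(k+1)=D(k)+d_I(k)I(k)$, with $S(0)=S_0$, $I(0)=I_0>0$, $R(0)=D(0)=0$, $I_0\delta_{\max}<S_0$. It is assumed that the policy $u$ keeps $S(k),I(k),R(k),D(k)$ nonnegative for all $k$ with probability one. The state transition function is $\Phi_I(k,k_0)=\prod_{i=k_0}^{k-1}(1+\delta(i)-d_I(i))$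 for integers $k\ge k_0\ge0$ (empty product $=1$). *)

theory Defs
  imports "HOL-Probability.Probability"
begin

definition PhiI :: "(nat \<Rightarrow> 'a \<Rightarrow> real) \<Rightarrow> (nat \<Rightarrow> 'a \<Rightarrow> real) \<Rightarrow> nat \<Rightarrow> nat \<Rightarrow> 'a \<Rightarrow> real" where
  "PhiI \<delta> dI k k0 w = (\<Prod>i\<in>{k0..<k}. (1 + \<delta> i w - dI i w))"

definition info_upto :: "'a measure \<Rightarrow> (nat \<Rightarrow> 'a \<Rightarrow> real \<times> real \<times> real \<times> real) \<Rightarrow> nat \<Rightarrow> 'a measure" where
  "info_upto M X k = sigma (space M)
     (\<Union>j\<in>{..k}. {X j -` A \<inter> space M | A. A \<in> sets borel})"

definition noise :: "(nat \<Rightarrow> 'a \<Rightarrow> real) \<Rightarrow> (nat \<Rightarrow> 'a \<Rightarrow> real) \<Rightarrow> (nat \<Rightarrow> 'a \<Rightarrow> real)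
    \<Rightarrow> nat + nat + nat \<Rightarrow> 'a \<Rightarrow> real" where
  "noise \<delta> dI v i = (case i of Inl k \<Rightarrow> \<delta> k | Inr (Inl k) \<Rightarrow> dI k | Inr (Inr k) \<Rightarrow> v k)"

end

theory Submission
  imports Defs
begin

text \<open>Unrolling the linear recursion for \<open>I\<close> gives the closed form. For the expectations, let
  \<open>history k\<close> be the \<sigma>-algebra generated by the noise \<open>\<delta>, dI, v\<close> of the days before \<open>k\<close>.
  By causality of \<open>u\<close> and induction on \<open>k\<close>, the states and the control of day \<open>k\<close> are
  \<open>history k\<close>-measurable, while the noise of day \<open>k\<close> is independent of \<open>history k\<close>. Hence
  \<open>E[\<delta>(k) I(k)] = \<delta>bar E[I(k)]\<close>, \<open>E[dI(k) I(k)] = dbar E[I(k)]\<close> and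
  \<open>E[v(k) u(k)] = E[v(k)] E[u(k)] \<ge> vmin E[u(k)]\<close>, so
  \<open>E[I(k+1)] \<le> (1 + \<delta>bar - dbar) E[I(k)] - vmin E[u(k)]\<close>; iterating this inequality, whose
  coefficient is nonnegative because \<open>dbar \<le> dmax < 1\<close>, gives the bound. All expectations exist
  since \<open>0 \<le> I(k) \<le> (1 + \<delta>max)^k I0\<close> almost surely.\<close>

definition generated_by :: "'a measure \<Rightarrow> ('i \<Rightarrow> 'a \<Rightarrow> 'b::topological_space) \<Rightarrow> 'i set \<Rightarrow> 'a measure" where
  "generated_by M X J = sigma (space M) (\<Union>i\<in>J. {X i -` A \<inter> space M | A. A \<in> sets borel})"

lemma space_generated_by [simp]: "space (generated_by M X J) = space M"
  unfolding generated_by_def by (simp add: space_measure_of_conv)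

lemma sets_generated_by:
  "sets (generated_by M X J) = sigma_sets (space M) (\<Union>i\<in>J. {X i -` A \<inter> space M | A. A \<in> sets borel})"
  unfolding generated_by_def by (rule sets_measure_of) auto

lemma info_upto_eq_generated_by: "info_upto M Z k = generated_by M Z {..k}"
  unfolding info_upto_def generated_by_def ..

lemma measurable_generated_by_var:
  "i \<in> J \<Longrightarrow> X i \<in> borel_measurable (generated_by M X J)"
  unfolding measurable_def by (auto simp: sets_generated_by intro!: sigma_sets.Basic)

lemma measurable_generated_by_mono:
  "J \<subseteq> J' \<Longrightarrow> f \<in> measurable (generated_by M X J) N \<Longrightarrow> f \<in> measurable (generated_by M X J') N"
  unfolding generated_by_def by (rule subsetD[OF measurable_mono1]) auto

lemma measurable_from_generated_by:
  assumes "space M' = space M" "\<And>i. i \<in> J \<Longrightarrow> X i \<in> borel_measurable M'"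
    and "f \<in> measurable (generated_by M X J) N"
  shows "f \<in> measurable M' N"
proof -
  have "sets (generated_by M X J) \<subseteq> sets M'"
    unfolding sets_generated_by using assms(1) measurable_sets[OF assms(2)]
    by (intro sets.sigma_sets_subset[of _ M', simplified assms(1)]) auto
  then show ?thesis
    using measurable_mono[of N N "generated_by M X J" M'] assms(1,3) by auto
qed

lemma (in prob_space) indep_var_generated_by:
  fixes X :: "'i \<Rightarrow> 'a \<Rightarrow> 'b::topological_space"
  assumes indep: "indep_vars (\<lambda>_. borel) X I" and "j \<in> I" "J \<subseteq> I" "j \<notin> J"
    and Y: "Y \<in> borel_measurable (generated_by M X J)"
  shows "indep_var borel (X j) borel Y"
proof -
  let ?E = "\<lambda>i. {X i -` A \<inter> space M | A. A \<in> sets borel}"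
  let ?I = "\<lambda>b. if b then {j} else J"
  have rv: "\<And>i. i \<in> I \<Longrightarrow> X i \<in> borel_measurable M"
    using indep by (simp add: indep_vars_def2)
  have indep_pair: "indep_sets (\<lambda>b. sigma_sets (space M) (\<Union>i\<in>?I b. ?E i)) UNIV"
  proof (rule indep_sets_collect_sigma)
    have "indep_sets ?E I"
      using indep by (simp add: indep_vars_def2)
    then show "indep_sets ?E (\<Union>b\<in>UNIV. ?I b)"
      by (rule indep_sets_mono_index[rotated]) (use assms(2,3) in auto)
    show "Int_stable (?E i)" for i
      unfolding Setcompr_eq_image
    proof (rule Int_stableI_image)
      fix A B :: "'b set" assume "A \<in> sets borel" "B \<in> sets borel"
      then show "\<exists>C\<in>sets borel. X i -` A \<inter> space M \<inter> (X i -` B \<inter> space M) = X i -` C \<inter> space M"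
        by (intro bexI[of _ "A \<inter> B"]) auto
    qed
    show "disjoint_family_on ?I UNIV"
      using assms(4) by (auto simp: disjoint_family_on_def)
  qed
  have Y_rv: "Y \<in> borel_measurable M"
    by (rule measurable_from_generated_by[OF refl _ Y]) (use rv assms(3) in blast)
  have Y_sets: "Y -` A \<inter> space M \<in> sigma_sets (space M) (\<Union>i\<in>J. ?E i)" if "A \<in> sets borel" for A
    using measurable_sets[OF Y that] by (simp add: sets_generated_by)
  show ?thesis
    unfolding indep_var_def indep_vars_def2
  proof
    show "\<forall>b\<in>UNIV. random_variable (case_bool borel borel b) (case_bool (X j) Y b)"
      using rv[OF assms(2)] Y_rv by (simp split: bool.split)
    show "indep_sets (\<lambda>b. {case_bool (X j) Y b -` A \<inter> space M |A. A \<in> sets (case_bool borel borel b)}) UNIV"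
    proof (rule indep_sets_mono_sets[OF indep_pair])
      show "{case_bool (X j) Y b -` A \<inter> space M |A. A \<in> sets (case_bool borel borel b)}
          \<subseteq> sigma_sets (space M) (\<Union>i\<in>?I b. ?E i)" for b
        using Y_sets by (cases b) auto
    qed
  qed
qed

lemma linear_recurrence_closed_form:
  fixes x p q :: "nat \<Rightarrow> 'a::comm_ring_1"
  assumes step: "\<And>k. x (Suc k) = p k * x k - q k"
  shows "x k = (\<Prod>i<k. p i) * x 0 - (\<Sum>i<k. (\<Prod>j\<in>{Suc i..<k}. p j) * q i)"
proof (induction k)
  case (Suc k)
  have "(\<Sum>i<k. (\<Prod>j\<in>{Suc i..<Suc k}. p j) * q i) = p k * (\<Sum>i<k. (\<Prod>j\<in>{Suc i..<k}. p j) * q i)"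
    by (auto simp: sum_distrib_left prod.atLeastLessThan_Suc ac_simps intro!: sum.cong)
  then show ?case
    by (simp add: step Suc.IH algebra_simps)
qed simp

lemma linear_recurrence_le:
  fixes x y :: "nat \<Rightarrow> 'a::linordered_idom"
  assumes "0 \<le> a" and step: "\<And>k. x (Suc k) \<le> a * x k - c * y k"
  shows "x k \<le> a ^ k * x 0 - c * (\<Sum>i<k. a ^ (k - i - 1) * y i)"
proof (induction k)
  case (Suc k)
  have "(\<Sum>i<Suc k. a ^ (Suc k - i - 1) * y i) = a * (\<Sum>i<k. a ^ (k - i - 1) * y i) + y k"
    by (auto simp: sum_distrib_left Suc_diff_Suc mult.assoc power_Suc[symmetric] simp del: power_Suc
        intro!: sum.cong)
  have "x (Suc k) \<le> a * x k - c * y k" by (rule step)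
  also have "\<dots> \<le> a * (a ^ k * x 0 - c * (\<Sum>i<k. a ^ (k - i - 1) * y i)) - c * y k"
    using mult_left_mono[OF Suc.IH \<open>0 \<le> a\<close>] by simp
  also have "\<dots> = a ^ Suc k * x 0 - c * (\<Sum>i<Suc k. a ^ (Suc k - i - 1) * y i)"
    unfolding \<open>(\<Sum>i<Suc k. _) = _\<close> by (simp add: algebra_simps)
  finally show ?case .
qed simp

definition noise_day :: "nat + nat + nat \<Rightarrow> nat" where
  "noise_day i = (case i of Inl k \<Rightarrow> k | Inr (Inl k) \<Rightarrow> k | Inr (Inr k) \<Rightarrow> k)"

locale epidemic_model = prob_space M
  for M :: "'a measure"
    and \<delta> dI v u S I R D :: "nat \<Rightarrow> 'a \<Rightarrow> real"
    and \<delta>max dmax vmin vmax S0 I0 :: real +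
  assumes meas_\<delta>: "\<And>k. \<delta> k \<in> borel_measurable M"
    and meas_dI: "\<And>k. dI k \<in> borel_measurable M"
    and meas_v: "\<And>k. v k \<in> borel_measurable M"
    and indep: "indep_vars (\<lambda>_. borel) (noise \<delta> dI v) UNIV"
    and bd_\<delta>: "\<And>k w. w \<in> space M \<Longrightarrow> 0 \<le> \<delta> k w \<and> \<delta> k w \<le> \<delta>max"
    and bd_dI: "\<And>k w. w \<in> space M \<Longrightarrow> 0 \<le> dI k w \<and> dI k w \<le> dmax"
    and dmax_less_1: "dmax < 1"
    and bd_v: "\<And>k w. w \<in> space M \<Longrightarrow> vmin \<le> v k w \<and> v k w \<le> vmax"
    and vmin_pos: "0 < vmin"
    and u_nonneg: "\<And>k w. w \<in> space M \<Longrightarrow> 0 \<le> u k w"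
    and causal: "\<And>k. u k \<in> borel_measurable
                   (info_upto M (\<lambda>j w. (S j w, I j w, R j w, D j w)) k)"
    and S_step: "\<And>k w. w \<in> space M \<Longrightarrow> S (Suc k) w = S k w - \<delta> k w * I k w"
    and I_step: "\<And>k w. w \<in> space M \<Longrightarrow>
                   I (Suc k) w = (1 + \<delta> k w) * I k w - v k w * u k w - dI k w * I k w"
    and R_step: "\<And>k w. w \<in> space M \<Longrightarrow> R (Suc k) w = R k w + v k w * u k w"
    and D_step: "\<And>k w. w \<in> space M \<Longrightarrow> D (Suc k) w = D k w + dI k w * I k w"
    and init: "\<And>w. w \<in> space M \<Longrightarrow> S 0 w = S0 \<and> I 0 w = I0 \<and> R 0 w = 0 \<and> D 0 w = 0"
    and I_nonneg: "AE w in M. \<forall>k. 0 \<le> I k w"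
begin

definition history :: "nat \<Rightarrow> 'a measure" where
  "history k = generated_by M (noise \<delta> dI v) {i. noise_day i < k}"

lemma space_history [simp]: "space (history k) = space M"
  by (simp add: history_def)

lemma history_mono: "k \<le> n \<Longrightarrow> f \<in> measurable (history k) N \<Longrightarrow> f \<in> measurable (history n) N"
  unfolding history_def by (erule measurable_generated_by_mono[rotated]) auto

lemma measurable_history_cong:
  "(\<And>w. w \<in> space M \<Longrightarrow> f w = g w) \<Longrightarrow> f \<in> measurable (history k) N \<longleftrightarrow> g \<in> measurable (history k) N"
  by (rule measurable_cong) simp

lemma noise_measurable_history:
  assumes "k < n"
  shows "\<delta> k \<in> borel_measurable (history n)" "dI k \<in> borel_measurable (history n)"
    "v k \<in> borel_measurable (history n)"
  using measurable_generated_by_var[of "Inl k" "{i. noise_day i < n}" "noise \<delta> dI v" M]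
    measurable_generated_by_var[of "Inr (Inl k)" "{i. noise_day i < n}" "noise \<delta> dI v" M]
    measurable_generated_by_var[of "Inr (Inr k)" "{i. noise_day i < n}" "noise \<delta> dI v" M] assms
  by (simp_all add: history_def noise_day_def noise_def)

lemma control_measurable_if_states:
  assumes "\<And>j. j \<le> k \<Longrightarrow> S j \<in> borel_measurable (history k) \<and> I j \<in> borel_measurable (history k)
    \<and> R j \<in> borel_measurable (history k) \<and> D j \<in> borel_measurable (history k)"
  shows "u k \<in> borel_measurable (history k)"
  using causal[of k] unfolding info_upto_eq_generated_by
  by (rule measurable_from_generated_by[rotated 2]) (auto intro!: borel_measurable_Pair dest: assms)

lemma states_measurable_history:
  "S k \<in> borel_measurable (history k) \<and> I k \<in> borel_measurable (history k)
    \<and> R k \<in> borel_measurable (history k) \<and> D k \<in> borel_measurable (history k)"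
proof (induction k rule: less_induct)
  case (less k)
  show ?case
  proof (cases k)
    case 0
    have "f \<in> borel_measurable (history 0)" if "\<And>w. w \<in> space M \<Longrightarrow> f w = c" for f and c :: real
      using measurable_history_cong[OF that] by simp
    then show ?thesis
      unfolding 0 by (intro conjI) (auto simp: init)
  next
    case (Suc m)
    have prev: "S m \<in> borel_measurable (history k)" "I m \<in> borel_measurable (history k)"
      "R m \<in> borel_measurable (history k)" "D m \<in> borel_measurable (history k)"
      using less[of m] history_mono[of m k] Suc by auto
    have "u m \<in> borel_measurable (history m)"
    proof (rule control_measurable_if_states)
      fix j assume "j \<le> m"
      then show "S j \<in> borel_measurable (history m) \<and> I j \<in> borel_measurable (history m)
        \<and> R j \<in> borel_measurable (history m) \<and> D j \<in> borel_measurable (history m)"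
        using less[of j] history_mono[of j m] Suc by auto
    qed
    then have "u m \<in> borel_measurable (history k)"
      using history_mono[of m k] Suc by simp
    moreover have "\<delta> m \<in> borel_measurable (history k)" "dI m \<in> borel_measurable (history k)"
      "v m \<in> borel_measurable (history k)"
      using noise_measurable_history Suc by auto
    ultimately show ?thesis
      using prev unfolding Suc
      by (auto simp: measurable_history_cong[OF S_step] measurable_history_cong[OF I_step]
          measurable_history_cong[OF R_step] measurable_history_cong[OF D_step])
  qed
qed

lemma control_measurable_history: "u k \<in> borel_measurable (history k)"
  by (rule control_measurable_if_states) (use states_measurable_history history_mono in blast)

lemma noise_indep_history:
  assumes "Y \<in> borel_measurable (history k)"
  shows "indep_var borel (\<delta> k) borel Y" "indep_var borel (dI k) borel Y" "indep_var borel (v k) borel Y"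
  using indep_var_generated_by[OF indep, of "Inl k" "{i. noise_day i < k}" Y]
    indep_var_generated_by[OF indep, of "Inr (Inl k)" "{i. noise_day i < k}" Y]
    indep_var_generated_by[OF indep, of "Inr (Inr k)" "{i. noise_day i < k}" Y] assms
  by (simp_all add: history_def noise_day_def noise_def)

lemma measurable_from_history:
  "f \<in> measurable (history k) N \<Longrightarrow> f \<in> measurable M N"
  unfolding history_def
  by (erule measurable_from_generated_by[OF refl, rotated])
    (auto simp: noise_def meas_\<delta> meas_dI meas_v split: sum.split)

lemma infected_growth_bound:
  assumes w: "w \<in> space M" and I_nonneg: "\<And>k. 0 \<le> I k w"
  shows "I k w \<le> (1 + \<delta>max) ^ k * I0" and "vmin * u k w \<le> (1 + \<delta>max) ^ Suc k * I0"
proof -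
  have growth: "(1 + \<delta> k w) * I k w \<le> (1 + \<delta>max) * I k w" for k
    using bd_\<delta>[OF w] I_nonneg by (intro mult_right_mono) auto
  have treated: "0 \<le> v k w * u k w" for k
    using bd_v[OF w, of k] vmin_pos u_nonneg[OF w, of k] by simp
  have died: "0 \<le> dI k w * I k w" for k
    using bd_dI[OF w, of k] I_nonneg[of k] by simp
  have step: "I (Suc k) w \<le> (1 + \<delta>max) * I k w" "v k w * u k w \<le> (1 + \<delta>max) * I k w" for k
    using I_step[OF w, of k] growth[of k] treated[of k] died[of k] I_nonneg[of "Suc k"] by linarith+
  have "0 \<le> 1 + \<delta>max"
    using bd_\<delta>[OF w, of 0] by simp
  show I_le: "I k w \<le> (1 + \<delta>max) ^ k * I0" for k
  proof (induction k)
    case (Suc k)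
    then show ?case
      using step(1)[of k] mult_left_mono[OF Suc \<open>0 \<le> 1 + \<delta>max\<close>] by (simp add: ac_simps)
  qed (simp add: init[OF w])
  have "vmin * u k w \<le> v k w * u k w"
    using bd_v[OF w] u_nonneg[OF w] by (intro mult_right_mono) auto
  also have "\<dots> \<le> (1 + \<delta>max) * I k w" by (rule step(2))
  also have "\<dots> \<le> (1 + \<delta>max) ^ Suc k * I0"
    using mult_left_mono[OF I_le \<open>0 \<le> 1 + \<delta>max\<close>] by (simp add: mult.assoc)
  finally show "vmin * u k w \<le> (1 + \<delta>max) ^ Suc k * I0" .
qed

lemma integrable_infected: "integrable M (I k)"
proof (rule integrable_const_bound)
  show "AE w in M. norm (I k w) \<le> (1 + \<delta>max) ^ k * I0"
    using I_nonneg AE_space by eventually_elim (auto intro: infected_growth_bound)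
qed (use states_measurable_history measurable_from_history in blast)

lemma integrable_control: "integrable M (u k)"
proof (rule integrable_const_bound)
  show "AE w in M. norm (u k w) \<le> (1 + \<delta>max) ^ Suc k * I0 / vmin"
    using I_nonneg AE_space
  proof eventually_elim
    case (elim w)
    then show ?case
      using infected_growth_bound(2)[of w k] u_nonneg[of w k] vmin_pos by (simp add: field_simps)
  qed
qed (use control_measurable_history measurable_from_history in blast)

lemma integrable_noise: "integrable M (\<delta> k)" "integrable M (dI k)" "integrable M (v k)"
proof -
  have bounds: "norm (\<delta> k w) \<le> \<delta>max" "norm (dI k w) \<le> dmax" "norm (v k w) \<le> vmax"
    if "w \<in> space M" for w
    using bd_\<delta>[OF that, of k] bd_dI[OF that, of k] bd_v[OF that, of k] vmin_pos by auto
  show "integrable M (\<delta> k)"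
    using bounds(1) meas_\<delta> by (intro integrable_const_bound[where B=\<delta>max] AE_I2) auto
  show "integrable M (dI k)"
    using bounds(2) meas_dI by (intro integrable_const_bound[where B=dmax] AE_I2) auto
  show "integrable M (v k)"
    using bounds(3) meas_v by (intro integrable_const_bound[where B=vmax] AE_I2) auto
qed

lemma expected_infected_step:
  "expectation (I (Suc k))
     \<le> (1 + expectation (\<delta> k) - expectation (dI k)) * expectation (I k) - vmin * expectation (u k)"
proof -
  have I_indep: "indep_var borel (\<delta> k) borel (I k)" "indep_var borel (dI k) borel (I k)"
    using noise_indep_history states_measurable_history by blast+
  have u_indep: "indep_var borel (v k) borel (u k)"
    using noise_indep_history control_measurable_history by blast
  note products = indep_var_lebesgue_integral indep_var_integrable
  have "expectation (I (Suc k)) = expectation (\<lambda>w. I k w + \<delta> k w * I k w - dI k w * I k w - v k w * u k w)"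
    by (rule Bochner_Integration.integral_cong) (auto simp: I_step algebra_simps)
  also have "\<dots> = (1 + expectation (\<delta> k) - expectation (dI k)) * expectation (I k)
      - expectation (v k) * expectation (u k)"
    using products[OF I_indep(1)] products[OF I_indep(2)] products[OF u_indep]
    by (simp add: integrable_infected integrable_control integrable_noise algebra_simps)
  also have "\<dots> \<le> (1 + expectation (\<delta> k) - expectation (dI k)) * expectation (I k) - vmin * expectation (u k)"
    using bd_v u_nonneg integrable_noise(3)
    by (intro diff_left_mono mult_right_mono integral_ge_const integral_nonneg_AE AE_I2) auto
  finally show ?thesis .
qed

lemma infected_closed_form:
  assumes "w \<in> space M"
  shows "I k w = PhiI \<delta> dI k 0 w * I0 - (\<Sum>i<k. PhiI \<delta> dI k (i + 1) w * v i w * u i w)"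
  using linear_recurrence_closed_form[of "\<lambda>k. I k w" "\<lambda>i. 1 + \<delta> i w - dI i w" "\<lambda>i. v i w * u i w" k]
  by (simp add: I_step[OF assms] init[OF assms] PhiI_def atLeast0LessThan algebra_simps)

lemma expected_infected_le:
  assumes \<delta>bar: "\<And>k. expectation (\<delta> k) = \<delta>bar" and dbar: "\<And>k. expectation (dI k) = dbar"
  shows "expectation (I k) \<le> (1 + \<delta>bar - dbar) ^ k * I0
           - vmin * (\<Sum>i<k. (1 + \<delta>bar - dbar) ^ (k - i - 1) * expectation (u i))"
proof -
  have "0 \<le> \<delta>bar"
    unfolding \<delta>bar[symmetric, of 0] using bd_\<delta> by (intro integral_nonneg_AE AE_I2) auto
  moreover have "dbar \<le> dmax"
    unfolding dbar[symmetric, of 0] using bd_dI integrable_noise(2) by (intro integral_le_const AE_I2) auto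
  ultimately have "0 \<le> 1 + \<delta>bar - dbar"
    using dmax_less_1 by simp
  moreover have "expectation (I 0) = expectation (\<lambda>_. I0)"
    by (rule Bochner_Integration.integral_cong) (simp_all add: init)
  ultimately show ?thesis
    using linear_recurrence_le[where x="\<lambda>k. expectation (I k)" and y="\<lambda>k. expectation (u k)"]
      expected_infected_step by (simp add: \<delta>bar dbar prob_space)
qed

end

theorem lemma2:
  fixes M :: "'a measure"
    and \<delta> dI v u S I R D :: "nat \<Rightarrow> 'a \<Rightarrow> real"
    and \<delta>max dmax vmin vmax \<delta>bar dbar S0 I0 :: real
  assumes prob: "prob_space M"
    and meas: "\<And>k. \<delta> k \<in> borel_measurable M" "\<And>k. dI k \<in> borel_measurable M"
              "\<And>k. v k \<in> borel_measurable M"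
    and indep: "prob_space.indep_vars M (\<lambda>_. borel) (noise \<delta> dI v) UNIV"
    and iid: "\<And>k. distr M borel (\<delta> k) = distr M borel (\<delta> 0)"
             "\<And>k. distr M borel (dI k) = distr M borel (dI 0)"
             "\<And>k. distr M borel (v k) = distr M borel (v 0)"
    and bd_\<delta>: "\<And>k w. w \<in> space M \<Longrightarrow> 0 \<le> \<delta> k w \<and> \<delta> k w \<le> \<delta>max"
    and bd_dI: "\<And>k w. w \<in> space M \<Longrightarrow> 0 \<le> dI k w \<and> dI k w \<le> dmax"
    and dmax1: "dmax < 1"
    and bd_v: "\<And>k w. w \<in> space M \<Longrightarrow> vmin \<le> v k w \<and> v k w \<le> vmax"
    and vpos: "0 < vmin" and vmax1: "vmax \<le> 1"
    and \<delta>bar: "\<And>k. \<delta>bar = (\<integral>w. \<delta> k w \<partial>M)"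
    and dbar: "\<And>k. dbar = (\<integral>w. dI k w \<partial>M)"
    and u_nonneg: "\<And>k w. w \<in> space M \<Longrightarrow> 0 \<le> u k w"
    and causal: "\<And>k. u k \<in> borel_measurable
                   (info_upto M (\<lambda>j w. (S j w, I j w, R j w, D j w)) k)"
    and S_step: "\<And>k w. w \<in> space M \<Longrightarrow> S (Suc k) w = S k w - \<delta> k w * I k w"
    and I_step: "\<And>k w. w \<in> space M \<Longrightarrow>
                   I (Suc k) w = (1 + \<delta> k w) * I k w - v k w * u k w - dI k w * I k w"
    and R_step: "\<And>k w. w \<in> space M \<Longrightarrow> R (Suc k) w = R k w + v k w * u k w"
    and D_step: "\<And>k w. w \<in> space M \<Longrightarrow> D (Suc k) w = D k w + dI k w * I k w"
    and init: "\<And>w. w \<in> space M \<Longrightarrow> S 0 w = S0 \<and> I 0 w = I0 \<and> R 0 w = 0 \<and> D 0 w = 0"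
    and I0pos: "0 < I0" and init_bd: "I0 * \<delta>max < S0"
    and nonneg: "AE w in M. \<forall>k. 0 \<le> S k w \<and> 0 \<le> I k w \<and> 0 \<le> R k w \<and> 0 \<le> D k w"
  shows "\<forall>k\<ge>1.
           (\<forall>w\<in>space M. I k w = PhiI \<delta> dI k 0 w * I0
                             - (\<Sum>i<k. PhiI \<delta> dI k (i + 1) w * v i w * u i w))
         \<and> (\<integral>w. I k w \<partial>M) \<le> (1 + \<delta>bar - dbar) ^ k * I0
              - vmin * (\<Sum>i<k. (1 + \<delta>bar - dbar) ^ (k - i - 1) * (\<integral>w. u i w \<partial>M))"
proof -
  have I_nonneg: "AE w in M. \<forall>k. 0 \<le> I k w"
    using nonneg by (rule eventually_mono) blast
  interpret epidemic_model M \<delta> dI v u S I R D \<delta>max dmax vmin vmax S0 I0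
    using prob meas indep bd_\<delta> bd_dI dmax1 bd_v vpos u_nonneg causal S_step I_step R_step D_step
      init I_nonneg
    by (simp add: epidemic_model_def epidemic_model_axioms_def)
  show ?thesis
    using infected_closed_form expected_infected_le[OF \<delta>bar[symmetric] dbar[symmetric]] by simp
qed

end
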